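(* Let $n\ge3$, $K,H\le\mathbb{H}^\times$ finite with $[K,K]\le H\trianglelefteq K$, and let $P\le G_n(K,H)$ be a parabolic subgroup. Then there is a parabolic triple $(I_0,\Pi,\xi)$ with $P=P_{(I_0,\Pi,\xi)}$.
   Context: $\mathbb{H}$: quaternions. $A_n(K,H)$ is the group of diagonal matrices $\mathrm{diag}(k_1,\dots,k_n)$ with $k_i\in K$, $k_1\cdots k_n\in H$; $G_n(K,H)$ is the group generated by $A_n(K,H)$ and all $n\times n$ permutation matrices $M(\sigma)$, acting on $\mathbb{H}^n$ (column vectors, standard basis $e_1,\dots,e_n$) by left multiplication. A parabolic subgroup is the pointwise stabilizer in $G_n(K,H)$ of a subset of $\mathbb{H}^n$. A parabolic triple is $(I_0,\Pi,\xi)$ with $I_0\subseteq I=\{1,\dots,n\}$ (required empty if $K=\{1\}$), $\Pi=(I_1,\dots,I_d)$ a set partition of $I\setminus I_0$, and $\xi:I\setminus I_0\to K$. Let $D_\xi$ be the diagonal matrix with entry $\xi(j)$ for $j\notin I_0$ and $1$ for $j\in I_0$. Then $P_{(I_0,\Pi,\xi)}=P_0\times P_1\times\dots\times P_d$, where $P_0$ is $G_{|I_0|}(K,H)$ acting on the coordinates indexed by $I_0$ and trivially on the others (omitted if $I_0=\emptyset$), and $P_i=\{D_\xi M(\sigma)D_\xi^{-1}:\sigma\in\mathrm{Sym}(I_i)\}$ (the symmetric group permuting the vectors $\xi(j)e_j$, $j\in I_i$). *)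

theory Defs
  imports Complex_Main "HOL-Library.Disjoint_Sets" "HOL-Combinatorics.Permutations"
begin

datatype quat = Quat (qr: real) (qi: real) (qj: real) (qk: real)

lemma quat_eq_iff: "x = y \<longleftrightarrow> qr x = qr y \<and> qi x = qi y \<and> qj x = qj y \<and> qk x = qk y"
  by (cases x; cases y) auto

instantiation quat :: "{one, zero, plus, minus, uminus, times, inverse}"
begin
definition "0 = Quat 0 0 0 0"
definition "1 = Quat 1 0 0 0"
definition "x + y = Quat (qr x + qr y) (qi x + qi y) (qj x + qj y) (qk x + qk y)"
definition "x - y = Quat (qr x - qr y) (qi x - qi y) (qj x - qj y) (qk x - qk y)"
definition "- x = Quat (- qr x) (- qi x) (- qj x) (- qk x)"
definition "x * y = Quat
   (qr x * qr y - qi x * qi y - qj x * qj y - qk x * qk y)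
   (qr x * qi y + qi x * qr y + qj x * qk y - qk x * qj y)
   (qr x * qj y - qi x * qk y + qj x * qr y + qk x * qi y)
   (qr x * qk y + qi x * qj y - qj x * qi y + qk x * qr y)"
definition "inverse x = (let d = (qr x)^2 + (qi x)^2 + (qj x)^2 + (qk x)^2 in
   Quat (qr x / d) (- qi x / d) (- qj x / d) (- qk x / d))"
definition "divide x (y::quat) = x * inverse y"
instance ..
end

lemma quat_sq_pos:
  assumes "x \<noteq> (0::quat)"
  shows "(qr x)^2 + (qi x)^2 + (qj x)^2 + (qk x)^2 > 0"
proof -
  have "qr x \<noteq> 0 \<or> qi x \<noteq> 0 \<or> qj x \<noteq> 0 \<or> qk x \<noteq> 0"
    using assms by (auto simp: quat_eq_iff zero_quat_def)
  hence "(qr x)^2 > 0 \<or> (qi x)^2 > 0 \<or> (qj x)^2 > 0 \<or> (qk x)^2 > 0" by auto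
  moreover have "(qr x)^2 \<ge> 0" "(qi x)^2 \<ge> 0" "(qj x)^2 \<ge> 0" "(qk x)^2 \<ge> 0" by simp_all
  ultimately show ?thesis by linarith
qed

lemma quat_inverse_components:
  fixes a :: quat
  defines "c \<equiv> 1 / ((qr a)^2 + (qi a)^2 + (qj a)^2 + (qk a)^2)"
  shows "inverse a = Quat (qr a * c) (- qi a * c) (- qj a * c) (- qk a * c)"
  by (simp add: inverse_quat_def c_def Let_def)

instance quat :: division_ring
proof
  fix a b c :: quat
  show "a * b * c = a * (b * c)" by (simp add: quat_eq_iff times_quat_def algebra_simps)
  show "1 * a = a" by (simp add: quat_eq_iff times_quat_def one_quat_def)
  show "a * 1 = a" by (simp add: quat_eq_iff times_quat_def one_quat_def)
  show "a + b + c = a + (b + c)" by (simp add: quat_eq_iff plus_quat_def)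
  show "a + b = b + a" by (simp add: quat_eq_iff plus_quat_def)
  show "0 + a = a" by (simp add: quat_eq_iff plus_quat_def zero_quat_def)
  show "- a + a = 0" by (simp add: quat_eq_iff plus_quat_def zero_quat_def uminus_quat_def)
  show "a - b = a + - b" by (simp add: quat_eq_iff plus_quat_def minus_quat_def uminus_quat_def)
  show "(a + b) * c = a * c + b * c" by (simp add: quat_eq_iff plus_quat_def times_quat_def algebra_simps)
  show "a * (b + c) = a * b + a * c" by (simp add: quat_eq_iff plus_quat_def times_quat_def algebra_simps)
  show "(0::quat) \<noteq> 1" by (simp add: zero_quat_def one_quat_def)
  show "inverse (0::quat) = 0" by (simp add: inverse_quat_def zero_quat_def)
  show "a / b = a * inverse b" by (simp add: divide_quat_def)
  assume a: "a \<noteq> 0"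
  define d where "d = (qr a)^2 + (qi a)^2 + (qj a)^2 + (qk a)^2"
  define e where "e = 1 / d"
  have d0: "d \<noteq> 0" using quat_sq_pos[OF a] by (simp add: d_def)
  have ed: "e * d = 1" using d0 by (simp add: e_def)
  have inv: "inverse a = Quat (qr a * e) (- qi a * e) (- qj a * e) (- qk a * e)"
    using quat_inverse_components[of a] by (simp add: e_def d_def)
  have r: "qr a * e * qr a + qi a * e * qi a + qj a * e * qj a + qk a * e * qk a = 1"
  proof -
    have "qr a * e * qr a + qi a * e * qi a + qj a * e * qj a + qk a * e * qk a = e * d"
      by (simp add: d_def power2_eq_square algebra_simps)
    then show ?thesis using ed by simp
  qed
  show "inverse a * a = 1"
    unfolding quat_eq_iff inv times_quat_def one_quat_def
    using r by (simp add: algebra_simps)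
  show "a * inverse a = 1"
    unfolding quat_eq_iff inv times_quat_def one_quat_def
    using r by (simp add: algebra_simps)
qed

definition qsubgroup :: "quat set \<Rightarrow> bool" where
  "qsubgroup K \<longleftrightarrow> 0 \<notin> K \<and> 1 \<in> K \<and> (\<forall>x\<in>K. \<forall>y\<in>K. x * y \<in> K) \<and> (\<forall>x\<in>K. inverse x \<in> K)"

text \<open>Commutator subgroup [K,K] is contained in H (H a subgroup): all commutators lie in H.\<close>
definition commutators_in :: "quat set \<Rightarrow> quat set \<Rightarrow> bool" where
  "commutators_in K H \<longleftrightarrow> (\<forall>x\<in>K. \<forall>y\<in>K. x * y * inverse x * inverse y \<in> H)"

definition qnormal :: "quat set \<Rightarrow> quat set \<Rightarrow> bool" where
  "qnormal H K \<longleftrightarrow> qsubgroup H \<and> qsubgroup K \<and> H \<subseteq> K \<and>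
     (\<forall>k\<in>K. \<forall>h\<in>H. k * h * inverse k \<in> H)"

text \<open>A matrix over index set J is a function nat => nat => quat, meant to vanish outside J x J;
  vectors in H^J are functions nat => quat vanishing outside J.\<close>

type_synonym qmat = "nat \<Rightarrow> nat \<Rightarrow> quat"
type_synonym qvec = "nat \<Rightarrow> quat"

definition mmult :: "nat set \<Rightarrow> qmat \<Rightarrow> qmat \<Rightarrow> qmat" where
  "mmult J A B = (\<lambda>i j. \<Sum>k\<in>J. A i k * B k j)"

definition mact :: "nat set \<Rightarrow> qmat \<Rightarrow> qvec \<Rightarrow> qvec" where
  "mact J A x = (\<lambda>i. \<Sum>j\<in>J. A i j * x j)"

definition qvecs :: "nat set \<Rightarrow> qvec set" where
  "qvecs J = {x. \<forall>i. i \<notin> J \<longrightarrow> x i = 0}"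

definition idm :: "nat set \<Rightarrow> qmat" where
  "idm J = (\<lambda>i j. if i = j \<and> i \<in> J then 1 else 0)"

definition diagm :: "nat set \<Rightarrow> (nat \<Rightarrow> quat) \<Rightarrow> qmat" where
  "diagm J k = (\<lambda>i j. if i = j \<and> i \<in> J then k i else 0)"

text \<open>Permutation matrix M(sigma): M(sigma) e_j = e_{sigma j}.\<close>
definition permm :: "nat set \<Rightarrow> (nat \<Rightarrow> nat) \<Rightarrow> qmat" where
  "permm J \<sigma> = (\<lambda>i j. if i \<in> J \<and> j \<in> J \<and> i = \<sigma> j then 1 else 0)"

definition msubgroup :: "nat set \<Rightarrow> qmat set \<Rightarrow> bool" where
  "msubgroup J G \<longleftrightarrow> idm J \<in> G \<and> (\<forall>A\<in>G. \<forall>B\<in>G. mmult J A B \<in> G) \<and>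
     (\<forall>A\<in>G. \<exists>B\<in>G. mmult J A B = idm J \<and> mmult J B A = idm J)"

definition mgen :: "nat set \<Rightarrow> qmat set \<Rightarrow> qmat set" where
  "mgen J S = \<Inter>{G. msubgroup J G \<and> S \<subseteq> G}"

definition Agrp :: "nat set \<Rightarrow> quat set \<Rightarrow> quat set \<Rightarrow> qmat set" where
  "Agrp J K H = {diagm J k | k. (\<forall>j\<in>J. k j \<in> K) \<and>
      prod_list (map k (sorted_list_of_set J)) \<in> H}"

definition Ggrp :: "nat set \<Rightarrow> quat set \<Rightarrow> quat set \<Rightarrow> qmat set" where
  "Ggrp J K H = mgen J (Agrp J K H \<union> {permm J \<sigma> | \<sigma>. \<sigma> permutes J})"

definition stabiliser :: "nat set \<Rightarrow> qmat set \<Rightarrow> qvec set \<Rightarrow> qmat set" where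
  "stabiliser J G X = {g \<in> G. \<forall>x\<in>X. mact J g x = x}"

definition parabolic :: "nat set \<Rightarrow> quat set \<Rightarrow> quat set \<Rightarrow> qmat set \<Rightarrow> bool" where
  "parabolic J K H P \<longleftrightarrow> (\<exists>X \<subseteq> qvecs J. P = stabiliser J (Ggrp J K H) X)"

definition parabolic_triple ::
  "nat set \<Rightarrow> quat set \<Rightarrow> nat set \<Rightarrow> nat set set \<Rightarrow> (nat \<Rightarrow> quat) \<Rightarrow> bool" where
  "parabolic_triple I K I0 Pt \<xi> \<longleftrightarrow> I0 \<subseteq> I \<and> (K = {1} \<longrightarrow> I0 = {}) \<and>
     partition_on (I - I0) Pt \<and> (\<forall>j \<in> I - I0. \<xi> j \<in> K)"

definition Dxi :: "nat set \<Rightarrow> nat set \<Rightarrow> (nat \<Rightarrow> quat) \<Rightarrow> qmat" where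
  "Dxi I I0 \<xi> = diagm I (\<lambda>j. if j \<in> I0 then 1 else \<xi> j)"

definition Dxi_inv :: "nat set \<Rightarrow> nat set \<Rightarrow> (nat \<Rightarrow> quat) \<Rightarrow> qmat" where
  "Dxi_inv I I0 \<xi> = diagm I (\<lambda>j. inverse (if j \<in> I0 then 1 else \<xi> j))"

definition P0grp :: "nat set \<Rightarrow> quat set \<Rightarrow> quat set \<Rightarrow> nat set \<Rightarrow> qmat set" where
  "P0grp I K H I0 = {(\<lambda>i j. if i \<in> I0 \<and> j \<in> I0 then g i j else idm (I - I0) i j) | g.
      g \<in> Ggrp I0 K H}"

definition Pblock :: "nat set \<Rightarrow> nat set \<Rightarrow> (nat \<Rightarrow> quat) \<Rightarrow> nat set \<Rightarrow> qmat set" where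
  "Pblock I I0 \<xi> B = {mmult I (mmult I (Dxi I I0 \<xi>) (permm I \<sigma>)) (Dxi_inv I I0 \<xi>) | \<sigma>.
      \<sigma> permutes B}"

fun setprod_list :: "nat set \<Rightarrow> qmat set list \<Rightarrow> qmat set" where
  "setprod_list I [] = {idm I}"
| "setprod_list I (S # Ss) = {mmult I g h | g h. g \<in> S \<and> h \<in> setprod_list I Ss}"

text \<open>P_(I0,Pi,xi) = P_0 x P_1 x ... x P_d (internal product; the blocks of Pi are listed
  in some fixed (chosen) order I_1,...,I_d; the resulting set does not depend on the order since
  the factors pairwise commute).\<close>
definition Ptriple ::
  "nat set \<Rightarrow> quat set \<Rightarrow> quat set \<Rightarrow> nat set \<Rightarrow> nat set set \<Rightarrow> (nat \<Rightarrow> quat) \<Rightarrow> qmat set" where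
  "Ptriple I K H I0 Pt \<xi> = setprod_list I
     ((if I0 = {} then [] else [P0grp I K H I0]) @
      map (Pblock I I0 \<xi>) (SOME bs. distinct bs \<and> set bs = Pt))"

end

theory Submission
  imports Defs
begin

(*
  Since [K,K] <= H and H is normal in K, whether a product of elements of K lies in H depends
  only on the multiset of its factors.  Hence G_n(K,H) is the group of all monomial matrices
  M(sigma) diag(k) with k_1 ... k_n in H, and such a matrix fixes a vector x iff
  k_j x_j = x_(sigma j) for all j.

  Given X, let I_0 be the set of coordinates vanishing on X (empty if K is trivial) and split the
  other coordinates into classes of K-proportional ones: x_i = c x_j for all x in X, with a fixed
  c in K.  Writing each coordinate as xi(j) times the least coordinate of its class, a stabilising
  monomial matrix must permute I_0 and every class, with entry xi(sigma j) xi(j)^-1 on the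
  classes.  Splitting off its part on I_0, which lies in G(K,H) on I_0 because the remaining
  factor does, exhibits it as an element of P_0 times a product of the conjugated permutations
  D_xi M(sigma_i) D_xi^-1; conversely all these factors fix X.
*)

text \<open>\<open>monm J \<sigma> k\<close> is the monomial matrix \<open>M(\<sigma>) diag(k)\<close>, mapping \<open>e\<^sub>j\<close> to \<open>k j e\<^sub>\<sigma>\<^sub>j\<close>.\<close>
definition monm :: "nat set \<Rightarrow> (nat \<Rightarrow> nat) \<Rightarrow> (nat \<Rightarrow> quat) \<Rightarrow> qmat" where
  "monm J \<sigma> k = (\<lambda>i j. if i \<in> J \<and> j \<in> J \<and> i = \<sigma> j then k j else 0)"

lemma idm_eq_monm: "idm J = monm J id (\<lambda>_. 1)"
  by (auto simp: idm_def monm_def fun_eq_iff)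

lemma diagm_eq_monm: "diagm J k = monm J id k"
  by (auto simp: diagm_def monm_def fun_eq_iff)

lemma permm_eq_monm: "permm J \<sigma> = monm J \<sigma> (\<lambda>_. 1)"
  by (auto simp: permm_def monm_def fun_eq_iff)

lemma monm_cong:
  "(\<And>j. j \<in> J \<Longrightarrow> \<sigma> j = \<sigma>' j) \<Longrightarrow> (\<And>j. j \<in> J \<Longrightarrow> k j = k' j) \<Longrightarrow> monm J \<sigma> k = monm J \<sigma>' k'"
  by (auto simp: monm_def fun_eq_iff)

lemma monm_eqD:
  assumes "monm J \<sigma> k = monm J \<sigma>' k'" "\<sigma> permutes J" "j \<in> J" "k j \<noteq> 0"
  shows "\<sigma>' j = \<sigma> j" and "k' j = k j"
proof -
  have "\<sigma> j \<in> J" using assms(2,3) by (simp add: permutes_in_image)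
  moreover have "monm J \<sigma> k (\<sigma> j) j = monm J \<sigma>' k' (\<sigma> j) j" using assms(1) by simp
  ultimately show "\<sigma>' j = \<sigma> j" "k' j = k j" using assms(3,4) by (auto simp: monm_def split: if_splits)
qed

lemma mmult_monm:
  assumes "finite J" "\<tau> permutes J"
  shows "mmult J (monm J \<sigma> k) (monm J \<tau> k') = monm J (\<sigma> \<circ> \<tau>) (\<lambda>j. k (\<tau> j) * k' j)"
    (is "?A = ?B")
proof (intro ext)
  fix i j
  have "?A i j = (\<Sum>l\<in>J. if l = \<tau> j then ?B i j else 0)"
    unfolding mmult_def monm_def by (rule sum.cong) (auto simp: permutes_in_image[OF assms(2)])
  also have "\<dots> = ?B i j"
    using assms by (auto simp: monm_def permutes_in_image)
  finally show "?A i j = ?B i j" .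
qed

lemma mmult_assoc:
  assumes "finite J"
  shows "mmult J (mmult J A B) C = mmult J A (mmult J B C)"
  unfolding mmult_def
  by (auto simp: fun_eq_iff sum_distrib_left sum_distrib_right mult.assoc intro: sum.swap)

lemma mmult_idm_monm:
  "finite J \<Longrightarrow> \<sigma> permutes J \<Longrightarrow> mmult J (idm J) (monm J \<sigma> k) = monm J \<sigma> k"
  unfolding idm_eq_monm by (simp add: mmult_monm)

lemma mmult_monm_idm:
  "finite J \<Longrightarrow> mmult J (monm J \<sigma> k) (idm J) = monm J \<sigma> k"
  unfolding idm_eq_monm by (simp add: mmult_monm)

lemma mact_monm:
  assumes "finite J" "\<sigma> permutes J" "j \<in> J"
  shows "mact J (monm J \<sigma> k) x (\<sigma> j) = k j * x j"
proof -
  have "mact J (monm J \<sigma> k) x (\<sigma> j) = (\<Sum>l\<in>J. if l = j then k j * x j else 0)"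
    unfolding mact_def monm_def
    by (rule sum.cong) (use assms permutes_inj[OF assms(2)] in \<open>auto simp: permutes_in_image dest: injD\<close>)
  then show ?thesis using assms by simp
qed

lemma mact_monm_eq_iff:
  assumes "finite J" "\<sigma> permutes J" "x \<in> qvecs J"
  shows "mact J (monm J \<sigma> k) x = x \<longleftrightarrow> (\<forall>j\<in>J. k j * x j = x (\<sigma> j))"
proof
  assume "mact J (monm J \<sigma> k) x = x"
  then show "\<forall>j\<in>J. k j * x j = x (\<sigma> j)" using mact_monm[OF assms(1,2)] by metis
next
  assume fix_x: "\<forall>j\<in>J. k j * x j = x (\<sigma> j)"
  show "mact J (monm J \<sigma> k) x = x"
  proof
    fix i
    show "mact J (monm J \<sigma> k) x i = x i"
    proof (cases "i \<in> J")
      case True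
      then obtain j where "j \<in> J" "i = \<sigma> j"
        using permutes_image[OF assms(2)] by blast
      then show ?thesis using mact_monm[OF assms(1,2)] fix_x by simp
    next
      case False
      then show ?thesis using assms(3) by (simp add: mact_def monm_def qvecs_def)
    qed
  qed
qed

lemma mact_mmult:
  assumes "finite J"
  shows "mact J (mmult J A B) x = mact J A (mact J B x)"
  unfolding mact_def mmult_def
  by (auto simp: fun_eq_iff sum_distrib_left sum_distrib_right mult.assoc intro: sum.swap)

lemma mact_idm: "finite J \<Longrightarrow> x \<in> qvecs J \<Longrightarrow> mact J (idm J) x = x"
  by (simp add: idm_eq_monm mact_monm_eq_iff)

lemma setprod_list_subset:
  assumes "idm J \<in> S" "\<And>A B. A \<in> S \<Longrightarrow> B \<in> S \<Longrightarrow> mmult J A B \<in> S" "\<forall>A\<in>set Ss. A \<subseteq> S"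
  shows "setprod_list J Ss \<subseteq> S"
  using assms(3) by (induction Ss) (auto simp: assms(1,2) subset_iff)

lemma restrict_id_compose_disjoint:
  assumes "\<rho> ` B \<subseteq> B" "A \<inter> B = {}" "\<And>x. x \<notin> A \<union> B \<Longrightarrow> \<rho> x = x"
  shows "restrict_id \<rho> A \<circ> restrict_id \<rho> B = \<rho>"
  using assms by (fastforce simp: fun_eq_iff restrict_id_def)

lemma restrict_id_image_subset: "A \<subseteq> B \<Longrightarrow> restrict_id \<rho> B ` A = \<rho> ` A"
  by (intro image_cong) (auto simp: restrict_id_def)

lemma permutes_restrict_id_image:
  assumes "\<rho> permutes S" "\<rho> ` A = A"
  shows "restrict_id \<rho> A permutes A"
  by (rule permutes_restrict_id)
     (use assms in \<open>auto simp: bij_betw_def intro: inj_on_subset[OF permutes_inj_on[OF assms(1)]]\<close>)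

lemma permutes_restrict_id_split:
  assumes "\<sigma> permutes I" "\<sigma> ` A = A"
  shows "restrict_id \<sigma> A permutes A" and "restrict_id \<sigma> (I - A) permutes I - A"
    and "restrict_id \<sigma> A \<circ> restrict_id \<sigma> (I - A) = \<sigma>"
proof -
  have "\<sigma> ` (I - A) = I - A"
    using assms permutes_image[OF assms(1)] image_set_diff[OF permutes_inj[OF assms(1)]] by simp
  then show "restrict_id \<sigma> A permutes A" "restrict_id \<sigma> (I - A) permutes I - A"
    using permutes_restrict_id_image[OF assms(1)] assms(2) by blast+
  show "restrict_id \<sigma> A \<circ> restrict_id \<sigma> (I - A) = \<sigma>"
    using \<open>\<sigma> ` (I - A) = I - A\<close> permutes_not_in[OF assms(1)]
    by (intro restrict_id_compose_disjoint) auto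
qed

lemma mset_map_permutes:
  assumes "finite J" "\<sigma> permutes J"
  shows "mset (map (\<lambda>j. f (\<sigma> j)) (sorted_list_of_set J)) = mset (map f (sorted_list_of_set J))"
proof -
  have "mset (sorted_list_of_set J) = mset_set J"
    by (metis mset_sorted_list_of_multiset sorted_list_of_mset_set)
  then show ?thesis
    using permutes_implies_image_mset_eq[OF assms(2), where f = "f \<circ> \<sigma>" and f' = f] by (simp add: mset_map o_def)
qed

lemma mset_concat_map_pair:
  "mset (concat (map (\<lambda>j. [f j, g j]) L)) = mset (map f L) + mset (map g L)"
  by (induction L) auto

lemma prod_list_concat_map_pair:
  "prod_list (concat (map (\<lambda>j. [f j, g j]) L)) = prod_list (map (\<lambda>j. f j * g j :: 'a :: monoid_mult) L)"
  by (induction L) (auto simp: mult.assoc)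

lemma inverse_mult_distrib_division_ring:
  "inverse (a * b) = inverse b * inverse (a :: 'a :: division_ring)"
  by (cases "a = 0 \<or> b = 0") (auto simp: nonzero_inverse_mult_distrib)

lemma inverse_mult_cancel_left: "x \<noteq> 0 \<Longrightarrow> inverse x * (x * y) = (y :: 'a :: division_ring)"
  by (simp add: mult.assoc[symmetric])

lemma prod_list_rev_map_inverse:
  "prod_list (rev (map (\<lambda>j. inverse (f j)) L)) = inverse (prod_list (map f L) :: 'a :: division_ring)"
  by (induction L) (auto simp: inverse_mult_distrib_division_ring)

lemma filter_sorted_list_of_set:
  "finite I \<Longrightarrow> filter P (sorted_list_of_set I) = sorted_list_of_set {j \<in> I. P j}"
  by (metis filter_sort finite_list remdups_filter set_filter sorted_list_of_set_sort_remdups)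

lemma prod_list_map_filter:
  "(\<And>j. j \<in> set L \<Longrightarrow> \<not> P j \<Longrightarrow> f j = 1) \<Longrightarrow> prod_list (map f (filter P L)) = prod_list (map f L)"
  by (induction L) auto

lemma prod_list_sorted_list_of_set_subset:
  assumes "finite I" "I0 \<subseteq> I" "\<forall>j\<in>I - I0. f j = 1"
  shows "prod_list (map f (sorted_list_of_set I)) = prod_list (map f (sorted_list_of_set I0))"
proof -
  have "{j \<in> I. j \<in> I0} = I0" using assms(2) by blast
  then show ?thesis
    using prod_list_map_filter[of "sorted_list_of_set I" "\<lambda>j. j \<in> I0" f] assms(3)
      filter_sorted_list_of_set[OF assms(1), of "\<lambda>j. j \<in> I0"] assms(1) by auto
qed

lemma P0_embedding_monm:
  assumes "I0 \<subseteq> I" "\<sigma> permutes I0"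
  shows "(\<lambda>i j. if i \<in> I0 \<and> j \<in> I0 then monm I0 \<sigma> k i j else idm (I - I0) i j)
    = monm I \<sigma> (\<lambda>j. if j \<in> I0 then k j else 1)"
proof (intro ext)
  fix i j
  show "(if i \<in> I0 \<and> j \<in> I0 then monm I0 \<sigma> k i j else idm (I - I0) i j)
    = monm I \<sigma> (\<lambda>j. if j \<in> I0 then k j else 1) i j"
    using assms permutes_in_image[OF assms(2), of j] permutes_not_in[OF assms(2), of j]
    by (cases "j \<in> I0") (auto simp: monm_def idm_def)
qed

locale abelian_quotient =
  fixes K H :: "quat set"
  assumes normal: "qnormal H K" and commutators: "commutators_in K H"
begin

lemma K_nonzero: "x \<in> K \<Longrightarrow> x \<noteq> 0"
  and one_in_K: "1 \<in> K"
  and mult_in_K: "x \<in> K \<Longrightarrow> y \<in> K \<Longrightarrow> x * y \<in> K"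
  and inverse_in_K: "x \<in> K \<Longrightarrow> inverse x \<in> K"
  and one_in_H: "1 \<in> H"
  and mult_in_H: "x \<in> H \<Longrightarrow> y \<in> H \<Longrightarrow> x * y \<in> H"
  and inverse_in_H: "x \<in> H \<Longrightarrow> inverse x \<in> H"
  and conj_in_H: "k \<in> K \<Longrightarrow> h \<in> H \<Longrightarrow> k * h * inverse k \<in> H"
  and commutator_in_H: "x \<in> K \<Longrightarrow> y \<in> K \<Longrightarrow> x * y * inverse x * inverse y \<in> H"
  using normal commutators by (auto simp: qnormal_def qsubgroup_def commutators_in_def)

lemma prod_list_in_K: "set xs \<subseteq> K \<Longrightarrow> prod_list xs \<in> K"
  by (induction xs) (auto simp: one_in_K mult_in_K)

text \<open>This is where \<open>[K,K] \<subseteq> H \<unlhd> K\<close> enters: \<open>K/H\<close> is abelian.\<close>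
lemma prod_list_mset_eq_mod_H:
  assumes "set xs \<subseteq> K" "mset xs = mset ys"
  shows "prod_list xs * inverse (prod_list ys) \<in> H"
  using assms
proof (induction xs arbitrary: ys)
  case Nil
  then show ?case using one_in_H by simp
next
  case (Cons a xs)
  obtain us vs where ys: "ys = us @ a # vs"
    using Cons.prems(2) by (metis list.set_intros(1) mset_eq_setD split_list)
  have "set ys \<subseteq> K" using Cons.prems by (metis mset_eq_setD)
  then have a: "a \<in> K" and u: "prod_list us \<in> K" and v: "prod_list vs \<in> K"
    using ys prod_list_in_K by auto
  define w where "w = prod_list xs"
  have "w * inverse (prod_list us * prod_list vs) \<in> H"
    using Cons.IH[of "us @ vs"] Cons.prems ys unfolding w_def by auto
  then have "a * (w * inverse (prod_list us * prod_list vs)) * inverse a *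
      (a * prod_list us * inverse a * inverse (prod_list us)) \<in> H"
    using mult_in_H conj_in_H commutator_in_H a u by blast
  also have "a * (w * inverse (prod_list us * prod_list vs)) * inverse a *
      (a * prod_list us * inverse a * inverse (prod_list us)) =
      prod_list (a # xs) * inverse (prod_list ys)"
    using K_nonzero[OF a] K_nonzero[OF u] K_nonzero[OF v]
    by (simp add: ys w_def inverse_mult_distrib_division_ring mult.assoc inverse_mult_cancel_left)
  finally show ?case .
qed

lemma prod_list_in_H_iff_mset_eq:
  assumes "set xs \<subseteq> K" "mset xs = mset ys"
  shows "prod_list xs \<in> H \<longleftrightarrow> prod_list ys \<in> H"
proof -
  have "set ys \<subseteq> K" using assms by (metis mset_eq_setD)
  have "a \<in> H" if "a * inverse b \<in> H" "b \<in> H" "b \<in> K" for a b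
    using mult_in_H[OF that(1,2)] K_nonzero[OF that(3)] by (simp add: mult.assoc)
  then show ?thesis
    using prod_list_mset_eq_mod_H[OF assms] prod_list_mset_eq_mod_H[OF \<open>set ys \<subseteq> K\<close> assms(2)[symmetric]]
      prod_list_in_K assms(1) \<open>set ys \<subseteq> K\<close> by blast
qed

definition monomial_group :: "nat set \<Rightarrow> qmat set" where
  "monomial_group J = {monm J \<sigma> k | \<sigma> k. \<sigma> permutes J \<and> (\<forall>j\<in>J. k j \<in> K) \<and>
      prod_list (map k (sorted_list_of_set J)) \<in> H}"

lemma monm_in_monomial_group_iff:
  assumes "\<sigma> permutes J" "\<forall>j\<in>J. k j \<in> K"
  shows "monm J \<sigma> k \<in> monomial_group J \<longleftrightarrow> prod_list (map k (sorted_list_of_set J)) \<in> H"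
proof
  assume "monm J \<sigma> k \<in> monomial_group J"
  then obtain \<sigma>' k' where eq: "monm J \<sigma> k = monm J \<sigma>' k'"
    and "prod_list (map k' (sorted_list_of_set J)) \<in> H"
    unfolding monomial_group_def by blast
  moreover have "map k' (sorted_list_of_set J) = map k (sorted_list_of_set J)"
    using monm_eqD(2)[OF eq assms(1)] assms(2) K_nonzero
    by (cases "finite J") auto
  ultimately show "prod_list (map k (sorted_list_of_set J)) \<in> H" by simp
qed (use assms in \<open>auto simp: monomial_group_def\<close>)

lemma prod_list_map_mult_in_H_iff:
  assumes "\<forall>j\<in>set L. f j \<in> K" "\<forall>j\<in>set L. g j \<in> K" "mset (map f L) + mset (map g L) = mset ys"
  shows "prod_list (map (\<lambda>j. f j * g j) L) \<in> H \<longleftrightarrow> prod_list ys \<in> H"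
  unfolding prod_list_concat_map_pair[symmetric]
  by (rule prod_list_in_H_iff_mset_eq) (use assms in \<open>auto simp: mset_concat_map_pair\<close>)

lemma idm_in_monomial_group: "idm J \<in> monomial_group J"
  unfolding monomial_group_def idm_eq_monm using one_in_K one_in_H
  by (intro CollectI exI[of _ id] exI[of _ "\<lambda>_. 1 :: quat"]) (auto simp: map_replicate_const)

lemma monomial_group_mult:
  assumes "finite J" "A \<in> monomial_group J" "B \<in> monomial_group J"
  shows "mmult J A B \<in> monomial_group J"
proof -
  obtain \<sigma> k where A: "A = monm J \<sigma> k" "\<sigma> permutes J" "\<forall>j\<in>J. k j \<in> K"
      "prod_list (map k (sorted_list_of_set J)) \<in> H"
    using assms(2) unfolding monomial_group_def by blast
  obtain \<tau> k' where B: "B = monm J \<tau> k'" "\<tau> permutes J" "\<forall>j\<in>J. k' j \<in> K"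
      "prod_list (map k' (sorted_list_of_set J)) \<in> H"
    using assms(3) unfolding monomial_group_def by blast
  let ?L = "sorted_list_of_set J"
  have "\<forall>j\<in>set ?L. k (\<tau> j) \<in> K" "\<forall>j\<in>set ?L. k' j \<in> K"
    using A(3) B(3) assms(1) permutes_in_image[OF B(2)] by auto
  moreover have "mset (map (\<lambda>j. k (\<tau> j)) ?L) + mset (map k' ?L) = mset (map k ?L @ map k' ?L)"
    using mset_map_permutes[OF assms(1) B(2)] by simp
  moreover have "prod_list (map k ?L @ map k' ?L) \<in> H"
    using A(4) B(4) mult_in_H by simp
  ultimately have prod_in_H: "prod_list (map (\<lambda>j. k (\<tau> j) * k' j) ?L) \<in> H"
    using prod_list_map_mult_in_H_iff[of ?L "\<lambda>j. k (\<tau> j)" k' "map k ?L @ map k' ?L"] by simp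
  have "\<forall>j\<in>J. k (\<tau> j) * k' j \<in> K"
    using A(3) B(2,3) mult_in_K by (simp add: permutes_in_image)
  then have "monm J (\<sigma> \<circ> \<tau>) (\<lambda>j. k (\<tau> j) * k' j) \<in> monomial_group J"
    using monm_in_monomial_group_iff[OF permutes_compose[OF B(2) A(2)]] prod_in_H by simp
  then show ?thesis
    unfolding A(1) B(1) mmult_monm[OF assms(1) B(2)] .
qed

lemma monomial_group_inverse:
  assumes "finite J" "A \<in> monomial_group J"
  shows "\<exists>B\<in>monomial_group J. mmult J A B = idm J \<and> mmult J B A = idm J"
proof -
  obtain \<sigma> k where A: "A = monm J \<sigma> k" "\<sigma> permutes J" "\<forall>j\<in>J. k j \<in> K"
      "prod_list (map k (sorted_list_of_set J)) \<in> H"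
    using assms(2) unfolding monomial_group_def by blast
  let ?L = "sorted_list_of_set J"
  define k' where "k' = (\<lambda>j. inverse (k (inv \<sigma> j)))"
  have inv_perm: "inv \<sigma> permutes J" using permutes_inv[OF A(2)] .
  have k'_K: "\<forall>j\<in>J. k' j \<in> K"
    using A(3) inverse_in_K permutes_in_image[OF inv_perm] by (simp add: k'_def)
  have "mset (map k' ?L) = mset (rev (map (\<lambda>j. inverse (k j)) ?L))"
    unfolding k'_def using mset_map_permutes[OF assms(1) inv_perm, of "\<lambda>j. inverse (k j)"] by simp
  moreover have "prod_list (rev (map (\<lambda>j. inverse (k j)) ?L)) \<in> H"
    unfolding prod_list_rev_map_inverse by (rule inverse_in_H[OF A(4)])
  moreover have "set (map k' ?L) \<subseteq> K" using k'_K assms(1) by auto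
  ultimately have "prod_list (map k' ?L) \<in> H"
    using prod_list_in_H_iff_mset_eq by blast
  then have B: "monm J (inv \<sigma>) k' \<in> monomial_group J"
    using monm_in_monomial_group_iff[OF inv_perm k'_K] by blast
  have "mmult J A (monm J (inv \<sigma>) k') = idm J" "mmult J (monm J (inv \<sigma>) k') A = idm J"
    unfolding A(1) idm_eq_monm mmult_monm[OF assms(1) inv_perm] mmult_monm[OF assms(1) A(2)]
    using A(3) K_nonzero permutes_in_image[OF inv_perm]
    by (auto intro!: monm_cong simp: k'_def permutes_inverses[OF A(2)])
  then show ?thesis using B by blast
qed

lemma Ggrp_eq_monomial_group:
  assumes "finite J"
  shows "Ggrp J K H = monomial_group J"
proof
  have subgroup: "msubgroup J (monomial_group J)"
    unfolding msubgroup_def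
    using idm_in_monomial_group monomial_group_mult[OF assms] monomial_group_inverse[OF assms] by blast
  have "Agrp J K H \<subseteq> monomial_group J"
    unfolding Agrp_def monomial_group_def diagm_eq_monm by (auto intro!: exI[of _ id])
  moreover have "permm J \<sigma> \<in> monomial_group J" if "\<sigma> permutes J" for \<sigma>
    unfolding permm_eq_monm using that one_in_K one_in_H
    by (simp add: monm_in_monomial_group_iff map_replicate_const)
  ultimately show "Ggrp J K H \<subseteq> monomial_group J"
    unfolding Ggrp_def mgen_def by (intro Inter_lower) (use subgroup in blast)
  show "monomial_group J \<subseteq> Ggrp J K H"
    unfolding Ggrp_def mgen_def
  proof (intro Inter_greatest subsetI)
    fix G g
    assume "G \<in> {G. msubgroup J G \<and> Agrp J K H \<union> {permm J \<sigma> | \<sigma>. \<sigma> permutes J} \<subseteq> G}"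
      and "g \<in> monomial_group J"
    then have G: "msubgroup J G" "Agrp J K H \<subseteq> G" "{permm J \<sigma> | \<sigma>. \<sigma> permutes J} \<subseteq> G"
      by auto
    obtain \<sigma> k where g: "g = monm J \<sigma> k" "\<sigma> permutes J" "diagm J k \<in> Agrp J K H"
      using \<open>g \<in> monomial_group J\<close> unfolding monomial_group_def Agrp_def by blast
    have "diagm J k \<in> G" "permm J \<sigma> \<in> G" using G(2,3) g(2,3) by blast+
    have "g = mmult J (permm J \<sigma>) (diagm J k)"
      unfolding g permm_eq_monm diagm_eq_monm mmult_monm[OF assms permutes_id] by (rule monm_cong) auto
    then show "g \<in> G" using G(1) \<open>diagm J k \<in> G\<close> \<open>permm J \<sigma> \<in> G\<close> unfolding msubgroup_def by blast
  qed
qed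

text \<open>This is \<open>D M(\<sigma>) D\<^sup>-\<^sup>1\<close> for the diagonal matrix \<open>D\<close> with entries \<open>c\<close>; it lies in the
  group although \<open>D\<close> in general does not.\<close>
lemma monm_conj_in_monomial_group:
  assumes "finite J" "\<sigma> permutes J" "\<forall>j\<in>J. c j \<in> K"
  shows "monm J \<sigma> (\<lambda>j. c (\<sigma> j) * inverse (c j)) \<in> monomial_group J"
proof -
  let ?L = "sorted_list_of_set J"
  let ?ys = "map c ?L @ rev (map (\<lambda>j. inverse (c j)) ?L)"
  have "prod_list (map c ?L) \<noteq> 0"
    using assms(1,3) K_nonzero prod_list_in_K[of "map c ?L"] by auto
  then have "prod_list ?ys = 1"
    by (simp add: prod_list_rev_map_inverse)
  moreover have "mset (map (\<lambda>j. c (\<sigma> j)) ?L) + mset (map (\<lambda>j. inverse (c j)) ?L) = mset ?ys"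
    using mset_map_permutes[OF assms(1,2)] by simp
  moreover have "\<forall>j\<in>set ?L. c (\<sigma> j) \<in> K" "\<forall>j\<in>set ?L. inverse (c j) \<in> K"
    using assms inverse_in_K by (auto simp: permutes_in_image)
  ultimately have "prod_list (map (\<lambda>j. c (\<sigma> j) * inverse (c j)) ?L) \<in> H"
    using prod_list_map_mult_in_H_iff[of ?L "\<lambda>j. c (\<sigma> j)" "\<lambda>j. inverse (c j)" ?ys] one_in_H
    by (simp only:)
  moreover have "\<forall>j\<in>J. c (\<sigma> j) * inverse (c j) \<in> K"
    using assms(2,3) mult_in_K inverse_in_K by (simp add: permutes_in_image)
  ultimately show ?thesis
    using monm_in_monomial_group_iff[OF assms(2)] by simp
qed

lemma P0grp_eq_extensions:
  assumes "finite I0" "I0 \<subseteq> I"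
  shows "P0grp I K H I0 = {monm I \<sigma> (\<lambda>j. if j \<in> I0 then k j else 1) | \<sigma> k.
    \<sigma> permutes I0 \<and> (\<forall>j\<in>I0. k j \<in> K) \<and> prod_list (map k (sorted_list_of_set I0)) \<in> H}"
proof (intro set_eqI)
  fix g
  show "g \<in> P0grp I K H I0 \<longleftrightarrow> g \<in> {monm I \<sigma> (\<lambda>j. if j \<in> I0 then k j else 1) | \<sigma> k.
    \<sigma> permutes I0 \<and> (\<forall>j\<in>I0. k j \<in> K) \<and> prod_list (map k (sorted_list_of_set I0)) \<in> H}"
    unfolding P0grp_def Ggrp_eq_monomial_group[OF assms(1)] monomial_group_def mem_Collect_eq
  proof
    assume "\<exists>\<sigma> k. g = monm I \<sigma> (\<lambda>j. if j \<in> I0 then k j else 1) \<and> \<sigma> permutes I0 \<and>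
      (\<forall>j\<in>I0. k j \<in> K) \<and> prod_list (map k (sorted_list_of_set I0)) \<in> H"
    then obtain \<sigma> k where "g = monm I \<sigma> (\<lambda>j. if j \<in> I0 then k j else 1)" "\<sigma> permutes I0"
      "\<forall>j\<in>I0. k j \<in> K" "prod_list (map k (sorted_list_of_set I0)) \<in> H" by blast
    then show "\<exists>g'. g = (\<lambda>i j. if i \<in> I0 \<and> j \<in> I0 then g' i j else idm (I - I0) i j) \<and>
      (\<exists>\<sigma> k. g' = monm I0 \<sigma> k \<and> \<sigma> permutes I0 \<and> (\<forall>j\<in>I0. k j \<in> K) \<and>
        prod_list (map k (sorted_list_of_set I0)) \<in> H)"
      by (intro exI[of _ "monm I0 \<sigma> k"]) (auto simp: P0_embedding_monm[OF assms(2)])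
  qed (auto simp: P0_embedding_monm[OF assms(2)]; blast)
qed

lemma P0grp_eq:
  assumes "finite I" "I0 \<subseteq> I"
  shows "P0grp I K H I0 = monomial_group I \<inter>
    {monm I \<sigma> k | \<sigma> k. \<sigma> permutes I0 \<and> (\<forall>j\<in>I. k j \<in> K) \<and> (\<forall>j\<in>I - I0. k j = 1)}"
    (is "_ = _ \<inter> ?M")
proof (intro equalityI subsetI)
  have in_group_iff: "monm I \<sigma> k \<in> monomial_group I \<longleftrightarrow> prod_list (map k (sorted_list_of_set I0)) \<in> H"
    if "\<sigma> permutes I0" "\<forall>j\<in>I. k j \<in> K" "\<forall>j\<in>I - I0. k j = 1" for \<sigma> k
    using monm_in_monomial_group_iff[OF permutes_subset[OF that(1) assms(2)] that(2)]
      prod_list_sorted_list_of_set_subset[OF assms that(3)] by simp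
  {
    fix g assume "g \<in> P0grp I K H I0"
    then obtain \<sigma> k where g: "g = monm I \<sigma> (\<lambda>j. if j \<in> I0 then k j else 1)" "\<sigma> permutes I0"
      "\<forall>j\<in>I0. k j \<in> K" "prod_list (map k (sorted_list_of_set I0)) \<in> H"
      unfolding P0grp_eq_extensions[OF finite_subset[OF assms(2,1)] assms(2)] by blast
    have ext_K: "\<forall>j\<in>I. (if j \<in> I0 then k j else 1) \<in> K" using g(3) one_in_K by simp
    have "prod_list (map (\<lambda>j. if j \<in> I0 then k j else 1) (sorted_list_of_set I0)) =
        prod_list (map k (sorted_list_of_set I0))"
      using finite_subset[OF assms(2,1)] by (intro arg_cong[where f = prod_list] map_cong) auto
    then have "g \<in> monomial_group I"
      using g(1,4) in_group_iff[OF g(2) ext_K] by simp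
    moreover have "g \<in> ?M"
      using g(1,2) ext_K by (intro CollectI exI[of _ \<sigma>] exI[of _ "\<lambda>j. if j \<in> I0 then k j else 1"]) auto
    ultimately show "g \<in> monomial_group I \<inter> ?M" by blast
  next
    fix g assume "g \<in> monomial_group I \<inter> ?M"
    then obtain \<sigma> k where g: "g = monm I \<sigma> k" "\<sigma> permutes I0" "\<forall>j\<in>I. k j \<in> K"
      "\<forall>j\<in>I - I0. k j = 1" "g \<in> monomial_group I"
      by blast
    have "g = monm I \<sigma> (\<lambda>j. if j \<in> I0 then k j else 1)"
      using g(1,4) by (auto intro: monm_cong)
    moreover have "prod_list (map k (sorted_list_of_set I0)) \<in> H"
      using in_group_iff[OF g(2,3,4)] g(1,5) by simp
    moreover have "\<forall>j\<in>I0. k j \<in> K" using g(3) assms(2) by blast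
    ultimately show "g \<in> P0grp I K H I0"
      unfolding P0grp_eq_extensions[OF finite_subset[OF assms(2,1)] assms(2)] using g(2) by blast
  }
qed

end

locale pointwise_stabiliser = abelian_quotient +
  fixes I :: "nat set" and X :: "qvec set"
  assumes finite_I: "finite I" and X_vecs: "X \<subseteq> qvecs I"
begin

definition proportional :: "nat \<Rightarrow> nat \<Rightarrow> bool" where
  "proportional i j \<longleftrightarrow> (\<exists>c\<in>K. \<forall>x\<in>X. x j = c * x i)"

definition zero_coords :: "nat set" where
  "zero_coords = {j \<in> I. \<forall>x\<in>X. x j = 0}"

text \<open>A parabolic triple must have \<open>I\<^sub>0 = {}\<close> when \<open>K\<close> is trivial; the coordinates vanishing
  on \<open>X\<close> then form one more class of proportional coordinates.\<close>
definition I0 :: "nat set" where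
  "I0 = (if K = {1} then {} else zero_coords)"

definition block :: "nat \<Rightarrow> nat set" where
  "block j = {i \<in> I - I0. proportional j i}"

definition blocks :: "nat set set" where
  "blocks = block ` (I - I0)"

definition xi :: "nat \<Rightarrow> quat" where
  "xi j = (SOME c. c \<in> K \<and> (\<forall>x\<in>X. x j = c * x (Min (block j))))"

definition dxi :: "nat \<Rightarrow> quat" where
  "dxi j = (if j \<in> I0 then 1 else xi j)"

definition conj_perm :: "(nat \<Rightarrow> nat) \<Rightarrow> qmat" where
  "conj_perm \<sigma> = monm I \<sigma> (\<lambda>j. dxi (\<sigma> j) * inverse (dxi j))"

definition Stab :: "qmat set" where
  "Stab = stabiliser I (Ggrp I K H) X"

lemma proportional_refl: "proportional i i"
  unfolding proportional_def using one_in_K by force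

lemma proportional_sym:
  assumes "proportional i j"
  shows "proportional j i"
proof -
  obtain c where "c \<in> K" "\<forall>x\<in>X. x j = c * x i"
    using assms unfolding proportional_def by blast
  then have "\<forall>x\<in>X. x i = inverse c * x j"
    using K_nonzero[OF \<open>c \<in> K\<close>] by (auto simp: inverse_mult_cancel_left)
  then show ?thesis
    unfolding proportional_def using inverse_in_K[OF \<open>c \<in> K\<close>] by blast
qed

lemma proportional_trans:
  assumes "proportional i j" "proportional j l"
  shows "proportional i l"
proof -
  obtain c d where "c \<in> K" "\<forall>x\<in>X. x j = c * x i" "d \<in> K" "\<forall>x\<in>X. x l = d * x j"
    using assms unfolding proportional_def by blast
  then have "\<forall>x\<in>X. x l = (d * c) * x i"
    by (simp add: mult.assoc)
  then show ?thesis
    unfolding proportional_def using mult_in_K[OF \<open>d \<in> K\<close> \<open>c \<in> K\<close>] by blast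
qed

lemma I0_subset: "I0 \<subseteq> I"
  by (auto simp: I0_def zero_coords_def)

lemma finite_I0: "finite I0"
  using finite_I I0_subset finite_subset by blast

lemma block_subset: "block j \<subseteq> I - I0"
  by (auto simp: block_def)

lemma block_eq: "proportional j i \<Longrightarrow> block i = block j"
  unfolding block_def using proportional_sym proportional_trans by blast

lemma self_in_block: "j \<in> I - I0 \<Longrightarrow> j \<in> block j"
  by (simp add: block_def proportional_refl)

lemma xi_spec:
  assumes "j \<in> I - I0"
  shows "xi j \<in> K" and "\<forall>x\<in>X. x j = xi j * x (Min (block j))"
proof -
  have "finite (block j)" using finite_I finite_subset[OF block_subset] by blast
  then have "Min (block j) \<in> block j" using self_in_block[OF assms] Min_in by blast
  then have "\<exists>c. c \<in> K \<and> (\<forall>x\<in>X. x j = c * x (Min (block j)))"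
    using proportional_sym unfolding block_def proportional_def by blast
  then have "xi j \<in> K \<and> (\<forall>x\<in>X. x j = xi j * x (Min (block j)))"
    unfolding xi_def by (rule someI_ex)
  then show "xi j \<in> K" "\<forall>x\<in>X. x j = xi j * x (Min (block j))" by blast+
qed

lemma dxi_in_K: "j \<in> I \<Longrightarrow> dxi j \<in> K"
  using xi_spec(1) one_in_K by (simp add: dxi_def)

lemma coords_in_block:
  assumes "j \<in> I - I0" "i \<in> block j" "x \<in> X"
  shows "x i = dxi i * inverse (dxi j) * x j"
proof -
  have i: "i \<in> I - I0" and "block i = block j"
    using assms(2) block_subset block_eq unfolding block_def by blast+
  then have "x i = xi i * x (Min (block j))" using xi_spec(2) assms(3) by metis
  moreover have "x j = xi j * x (Min (block j))" using xi_spec(2) assms(1,3) by blast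
  ultimately show ?thesis
    using assms(1) i K_nonzero[OF xi_spec(1)[OF assms(1)]]
    by (simp add: dxi_def mult.assoc inverse_mult_cancel_left)
qed

lemma blocks_partition: "partition_on (I - I0) blocks"
proof (rule partition_onI)
  show "\<Union> blocks = I - I0"
    using block_subset self_in_block unfolding blocks_def by blast
  show "disjnt b b'" if "b \<in> blocks" "b' \<in> blocks" "b \<noteq> b'" for b b'
    using that block_eq unfolding blocks_def disjnt_def block_def by blast
  show "{} \<notin> blocks"
    using self_in_block unfolding blocks_def by blast
qed

lemma parabolic_triple: "parabolic_triple I K I0 blocks xi"
proof -
  have "K = {1} \<Longrightarrow> I0 = {}" unfolding I0_def by simp
  then show ?thesis
    unfolding parabolic_triple_def using I0_subset blocks_partition xi_spec(1) by blast
qed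

lemma Stab_eq: "Stab = {g \<in> monomial_group I. \<forall>x\<in>X. mact I g x = x}"
  unfolding Stab_def stabiliser_def Ggrp_eq_monomial_group[OF finite_I] ..

lemma monm_in_Stab_iff:
  assumes "\<sigma> permutes I"
  shows "monm I \<sigma> k \<in> Stab \<longleftrightarrow>
    monm I \<sigma> k \<in> monomial_group I \<and> (\<forall>x\<in>X. \<forall>j\<in>I. k j * x j = x (\<sigma> j))"
  using mact_monm_eq_iff[OF finite_I assms] X_vecs by (auto simp: Stab_eq)

lemma idm_in_Stab: "idm I \<in> Stab"
  using idm_in_monomial_group mact_idm[OF finite_I] X_vecs by (auto simp: Stab_eq)

lemma Stab_mult: "A \<in> Stab \<Longrightarrow> B \<in> Stab \<Longrightarrow> mmult I A B \<in> Stab"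
  using monomial_group_mult[OF finite_I] by (simp add: Stab_eq mact_mmult[OF finite_I])

lemma conj_perm_mult:
  assumes "\<sigma> permutes I" "\<tau> permutes I"
  shows "mmult I (conj_perm \<sigma>) (conj_perm \<tau>) = conj_perm (\<sigma> \<circ> \<tau>)"
  unfolding conj_perm_def mmult_monm[OF finite_I assms(2)]
  using K_nonzero dxi_in_K permutes_in_image[OF assms(2)]
  by (intro monm_cong) (simp_all add: mult.assoc inverse_mult_cancel_left)

lemma conj_perm_id: "conj_perm id = idm I"
  unfolding conj_perm_def idm_eq_monm using K_nonzero dxi_in_K by (intro monm_cong) auto

lemma conj_perm_in_monomial_group: "\<sigma> permutes I \<Longrightarrow> conj_perm \<sigma> \<in> monomial_group I"
  unfolding conj_perm_def using monm_conj_in_monomial_group finite_I dxi_in_K by blast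

lemma Pblock_eq:
  assumes "b \<subseteq> I"
  shows "Pblock I I0 xi b = conj_perm ` {\<sigma>. \<sigma> permutes b}"
proof -
  have "mmult I (mmult I (Dxi I I0 xi) (permm I \<sigma>)) (Dxi_inv I I0 xi) = conj_perm \<sigma>"
    if "\<sigma> permutes b" for \<sigma>
  proof -
    have D: "Dxi I I0 xi = monm I id dxi" "Dxi_inv I I0 xi = monm I id (\<lambda>j. inverse (dxi j))"
      unfolding Dxi_def Dxi_inv_def diagm_eq_monm dxi_def by simp_all
    show ?thesis
      unfolding D permm_eq_monm conj_perm_def mmult_monm[OF finite_I permutes_subset[OF that assms]]
        mmult_monm[OF finite_I permutes_id]
      by (intro monm_cong) simp_all
  qed
  then show ?thesis unfolding Pblock_def by (force simp: image_def)
qed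

lemma conj_perm_in_Stab:
  assumes "b \<in> blocks" "\<sigma> permutes b"
  shows "conj_perm \<sigma> \<in> Stab"
proof -
  obtain i where i: "i \<in> I - I0" "b = block i" using assms(1) unfolding blocks_def by blast
  have \<sigma>: "\<sigma> permutes I" using permutes_subset[OF assms(2)] block_subset i(2) by blast
  have "dxi (\<sigma> j) * inverse (dxi j) * x j = x (\<sigma> j)" if "x \<in> X" "j \<in> I" for x j
  proof (cases "j \<in> b")
    case True
    then have "\<sigma> j \<in> block i" "j \<in> block i" using permutes_in_image[OF assms(2)] i(2) by auto
    then have "x (\<sigma> j) = dxi (\<sigma> j) * inverse (dxi i) * x i" "x j = dxi j * inverse (dxi i) * x i"
      using coords_in_block i(1) that(1) by blast+
    moreover have "dxi j \<noteq> 0" using K_nonzero dxi_in_K that(2) by blast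
    ultimately show ?thesis by (simp add: mult.assoc inverse_mult_cancel_left)
  next
    case False
    then show ?thesis
      using permutes_not_in[OF assms(2)] K_nonzero dxi_in_K that(2) by simp
  qed
  then show ?thesis
    unfolding conj_perm_def monm_in_Stab_iff[OF \<sigma>]
    using conj_perm_in_monomial_group[OF \<sigma>] by (simp add: conj_perm_def)
qed

lemma P0grp_subset_Stab:
  assumes "I0 \<noteq> {}"
  shows "P0grp I K H I0 \<subseteq> Stab"
proof
  fix g assume "g \<in> P0grp I K H I0"
  then obtain \<sigma> k where g: "g = monm I \<sigma> k" "g \<in> monomial_group I" "\<sigma> permutes I0"
    "\<forall>j\<in>I - I0. k j = 1"
    unfolding P0grp_eq[OF finite_I I0_subset] by blast
  have I0: "I0 = zero_coords" using assms by (simp add: I0_def split: if_splits)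
  have "k j * x j = x (\<sigma> j)" if "x \<in> X" "j \<in> I" for x j
  proof (cases "j \<in> I0")
    case True
    then have "x j = 0" "x (\<sigma> j) = 0"
      using permutes_in_image[OF g(3), of j] that(1) unfolding I0 zero_coords_def by auto
    then show ?thesis by simp
  next
    case False
    then show ?thesis using that(2) g(4) permutes_not_in[OF g(3)] by simp
  qed
  then show "g \<in> Stab"
    using g(1,2) monm_in_Stab_iff[OF permutes_subset[OF g(3) I0_subset]] by blast
qed

lemma blocks_disjoint: "b \<in> blocks \<Longrightarrow> b' \<in> blocks \<Longrightarrow> b \<noteq> b' \<Longrightarrow> b \<inter> b' = {}"
  using blocks_partition unfolding partition_on_def disjoint_def by blast

lemma Union_blocks: "\<Union> blocks = I - I0"
  using blocks_partition unfolding partition_on_def by blast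

lemma conj_perm_in_block_product:
  assumes "distinct bs" "set bs \<subseteq> blocks" "\<rho> permutes \<Union>(set bs)" "\<forall>b\<in>set bs. \<rho> ` b = b"
  shows "conj_perm \<rho> \<in> setprod_list I (map (Pblock I I0 xi) bs)"
  using assms
proof (induction bs arbitrary: \<rho>)
  case Nil
  then show ?case using conj_perm_id by (simp add: id_def)
next
  case (Cons b bs)
  let ?U = "\<Union>(set bs)"
  have b: "b \<in> blocks" "b \<subseteq> I" and U: "?U \<subseteq> I"
    using Cons.prems(2) Union_blocks by auto
  have disj: "b \<inter> ?U = {}"
    using Cons.prems(1,2) blocks_disjoint by fastforce
  have "\<rho> ` ?U = ?U" using Cons.prems(4) by (simp add: image_Union)
  then have perm_U: "restrict_id \<rho> ?U permutes ?U"
    using permutes_restrict_id_image[OF Cons.prems(3)] by blast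
  have perm_b: "restrict_id \<rho> b permutes b"
    using permutes_restrict_id_image[OF Cons.prems(3)] Cons.prems(4) by simp
  have "restrict_id \<rho> b \<circ> restrict_id \<rho> ?U = \<rho>"
    using \<open>\<rho> ` ?U = ?U\<close> disj permutes_not_in[OF Cons.prems(3)]
    by (intro restrict_id_compose_disjoint) auto
  then have "conj_perm \<rho> = mmult I (conj_perm (restrict_id \<rho> b)) (conj_perm (restrict_id \<rho> ?U))"
    using conj_perm_mult permutes_subset[OF perm_b b(2)] permutes_subset[OF perm_U U] by metis
  moreover have "conj_perm (restrict_id \<rho> b) \<in> Pblock I I0 xi b"
    using Pblock_eq[OF b(2)] perm_b by blast
  moreover have "conj_perm (restrict_id \<rho> ?U) \<in> setprod_list I (map (Pblock I I0 xi) bs)"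
  proof (rule Cons.IH)
    have "restrict_id \<rho> ?U ` b' = \<rho> ` b'" if "b' \<in> set bs" for b'
      using that by (intro restrict_id_image_subset) auto
    then show "\<forall>b'\<in>set bs. restrict_id \<rho> ?U ` b' = b'"
      using Cons.prems(4) by simp
  qed (use Cons.prems perm_U in auto)
  ultimately show ?case by auto
qed

lemma stabilising_perm_I0:
  assumes "\<forall>x\<in>X. \<forall>j\<in>I. k j * x j = x (\<sigma> j)" "\<sigma> permutes I" "j \<in> I0"
  shows "\<sigma> j \<in> I0"
proof -
  have "I0 = zero_coords" using assms(3) by (simp add: I0_def split: if_splits)
  then show ?thesis
    using assms permutes_in_image[OF assms(2), of j] by (force simp: zero_coords_def)
qed

lemma stabilising_perm_block:
  assumes "\<forall>x\<in>X. \<forall>j\<in>I. k j * x j = x (\<sigma> j)" "\<sigma> permutes I" "\<forall>j\<in>I. k j \<in> K" "j \<in> I - I0"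
  shows "\<sigma> j \<in> block j"
proof -
  have "proportional j (\<sigma> j)" unfolding proportional_def using assms(1,3,4) by (metis DiffD1)
  moreover have "\<sigma> j \<notin> I0"
  proof
    assume "\<sigma> j \<in> I0"
    then have I0: "I0 = zero_coords" by (simp add: I0_def split: if_splits)
    then have "\<forall>x\<in>X. k j * x j = 0" using assms(1,4) \<open>\<sigma> j \<in> I0\<close> by (auto simp: zero_coords_def)
    then have "j \<in> zero_coords" using assms(3,4) K_nonzero by (auto simp: zero_coords_def)
    then show False using assms(4) I0 by blast
  qed
  ultimately show ?thesis
    using permutes_in_image[OF assms(2)] assms(4) by (simp add: block_def)
qed

lemma stabilising_coeff:
  assumes "\<forall>x\<in>X. \<forall>j\<in>I. k j * x j = x (\<sigma> j)" "\<sigma> permutes I" "\<forall>j\<in>I. k j \<in> K" "j \<in> I - I0"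
  shows "k j = dxi (\<sigma> j) * inverse (dxi j)"
proof (cases "K = {1}")
  case True
  then show ?thesis
    using assms(3,4) dxi_in_K permutes_in_image[OF assms(2)] by auto
next
  case False
  then obtain x where x: "x \<in> X" "x j \<noteq> 0"
    using assms(4) by (auto simp: I0_def zero_coords_def)
  have "k j * x j = dxi (\<sigma> j) * inverse (dxi j) * x j"
    using assms(1,4) x(1) coords_in_block[OF assms(4) stabilising_perm_block[OF assms]] by simp
  then show ?thesis using x(2) by simp
qed

lemma stabilising_perm_image:
  assumes "\<forall>x\<in>X. \<forall>j\<in>I. k j * x j = x (\<sigma> j)" "\<sigma> permutes I" "\<forall>j\<in>I. k j \<in> K"
  shows "\<sigma> ` I0 = I0" and "\<forall>b\<in>blocks. \<sigma> ` b = b"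
proof -
  have inj: "inj_on \<sigma> A" for A using permutes_inj_on[OF assms(2)] .
  show "\<sigma> ` I0 = I0"
    using stabilising_perm_I0[OF assms(1,2)] finite_I0 inj by (intro endo_inj_surj) auto
  show "\<forall>b\<in>blocks. \<sigma> ` b = b"
  proof
    fix b assume "b \<in> blocks"
    then obtain i where "b = block i" unfolding blocks_def by blast
    moreover have "\<sigma> j \<in> block i" if "j \<in> block i" for j
      using that stabilising_perm_block[OF assms] block_eq block_subset
      unfolding block_def by blast
    moreover have "finite (block i)" using finite_I finite_subset[OF block_subset] by blast
    ultimately show "\<sigma> ` b = b" using inj by (intro endo_inj_surj) auto
  qed
qed

lemma Stab_decomposition:
  assumes "g \<in> Stab"
  obtains \<sigma>0 k0 \<sigma>1 where "g = mmult I (monm I \<sigma>0 k0) (conj_perm \<sigma>1)"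
    and "\<sigma>0 permutes I0" "\<forall>j\<in>I. k0 j \<in> K" "\<forall>j\<in>I - I0. k0 j = 1"
    and "\<sigma>1 permutes I - I0" "\<forall>b\<in>blocks. \<sigma>1 ` b = b"
proof -
  obtain \<sigma> k where g: "g = monm I \<sigma> k" "\<sigma> permutes I" "\<forall>j\<in>I. k j \<in> K"
    using assms unfolding Stab_eq monomial_group_def by blast
  then have stab: "\<forall>x\<in>X. \<forall>j\<in>I. k j * x j = x (\<sigma> j)"
    using assms monm_in_Stab_iff by blast
  have "\<sigma> ` I0 = I0" and blocks_inv: "\<forall>b\<in>blocks. \<sigma> ` b = b"
    using stabilising_perm_image[OF stab g(2,3)] by blast+
  define \<sigma>0 where "\<sigma>0 = restrict_id \<sigma> I0"
  define \<sigma>1 where "\<sigma>1 = restrict_id \<sigma> (I - I0)"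
  define k0 where "k0 = (\<lambda>j. if j \<in> I0 then k j else 1)"
  note split = permutes_restrict_id_split[OF g(2) \<open>\<sigma> ` I0 = I0\<close>, folded \<sigma>0_def \<sigma>1_def]
  have "g = mmult I (monm I \<sigma>0 k0) (conj_perm \<sigma>1)"
    unfolding g(1) conj_perm_def mmult_monm[OF finite_I permutes_subset[OF split(2) Diff_subset]]
  proof (rule monm_cong)
    fix j assume "j \<in> I"
    show "\<sigma> j = (\<sigma>0 \<circ> \<sigma>1) j" using split(3) by simp
    show "k j = k0 (\<sigma>1 j) * (dxi (\<sigma>1 j) * inverse (dxi j))"
    proof (cases "j \<in> I0")
      case True
      then show ?thesis by (simp add: \<sigma>1_def k0_def dxi_def)
    next
      case False
      then have "\<sigma> j \<in> I - I0"
        using stabilising_perm_block[OF stab g(2,3), of j] block_subset[of j] \<open>j \<in> I\<close> by blast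
      then show ?thesis
        using False \<open>j \<in> I\<close> stabilising_coeff[OF stab g(2,3)] by (simp add: \<sigma>1_def k0_def)
    qed
  qed
  moreover have "\<forall>j\<in>I. k0 j \<in> K" "\<forall>j\<in>I - I0. k0 j = 1"
    using g(3) one_in_K by (simp_all add: k0_def)
  moreover have "\<sigma>1 ` b = b" if b: "b \<in> blocks" for b
  proof -
    have "b \<subseteq> I - I0" using b Union_blocks by blast
    then show ?thesis
      unfolding \<sigma>1_def restrict_id_image_subset[OF \<open>b \<subseteq> I - I0\<close>] using blocks_inv b by blast
  qed
  ultimately show ?thesis using that split(1,2) by blast
qed

lemma left_factor_in_monomial_group:
  assumes "g \<in> Stab" "g = mmult I M (conj_perm \<sigma>1)" "\<sigma>1 permutes I" "M = monm I \<sigma>0 k0"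
  shows "M \<in> monomial_group I"
proof -
  have "M = mmult I M (conj_perm (\<sigma>1 \<circ> inv \<sigma>1))"
    using permutes_inv_o(1)[OF assms(3)] conj_perm_id mmult_monm_idm[OF finite_I] assms(4) by simp
  also have "\<dots> = mmult I g (conj_perm (inv \<sigma>1))"
    using assms(2,3) conj_perm_mult[OF assms(3) permutes_inv[OF assms(3)]] mmult_assoc[OF finite_I]
    by simp
  finally show ?thesis
    using assms(1) monomial_group_mult[OF finite_I] conj_perm_in_monomial_group[OF permutes_inv[OF assms(3)]]
    by (simp add: Stab_eq)
qed

lemma Stab_subset_product:
  assumes "distinct bs" "set bs = blocks"
  shows "Stab \<subseteq> setprod_list I ((if I0 = {} then [] else [P0grp I K H I0]) @ map (Pblock I I0 xi) bs)"
proof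
  fix g assume "g \<in> Stab"
  then obtain \<sigma>0 k0 \<sigma>1 where g: "g = mmult I (monm I \<sigma>0 k0) (conj_perm \<sigma>1)"
    and \<sigma>0: "\<sigma>0 permutes I0" and k0: "\<forall>j\<in>I. k0 j \<in> K" "\<forall>j\<in>I - I0. k0 j = 1"
    and \<sigma>1: "\<sigma>1 permutes I - I0" "\<forall>b\<in>blocks. \<sigma>1 ` b = b"
    by (rule Stab_decomposition)
  have \<sigma>1_I: "\<sigma>1 permutes I" using permutes_subset[OF \<sigma>1(1)] by blast
  have blocks_part: "conj_perm \<sigma>1 \<in> setprod_list I (map (Pblock I I0 xi) bs)"
    using assms \<sigma>1 Union_blocks by (intro conj_perm_in_block_product) auto
  show "g \<in> setprod_list I ((if I0 = {} then [] else [P0grp I K H I0]) @ map (Pblock I I0 xi) bs)"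
  proof (cases "I0 = {}")
    case True
    then have "monm I \<sigma>0 k0 = idm I"
      using \<sigma>0 k0(2) unfolding idm_eq_monm by (intro monm_cong) auto
    then have "g = conj_perm \<sigma>1"
      unfolding g conj_perm_def using mmult_idm_monm[OF finite_I \<sigma>1_I] by simp
    then show ?thesis using True blocks_part by simp
  next
    case False
    have "monm I \<sigma>0 k0 \<in> monomial_group I"
      using left_factor_in_monomial_group[OF \<open>g \<in> Stab\<close> g \<sigma>1_I] by blast
    then have "monm I \<sigma>0 k0 \<in> P0grp I K H I0"
      unfolding P0grp_eq[OF finite_I I0_subset] using \<sigma>0 k0 by blast
    then show ?thesis using False blocks_part g by auto
  qed
qed

lemma setprod_factors_subset_Stab:
  assumes "set bs = blocks"
  shows "setprod_list I ((if I0 = {} then [] else [P0grp I K H I0]) @ map (Pblock I I0 xi) bs) \<subseteq> Stab"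
proof (intro setprod_list_subset idm_in_Stab Stab_mult)
  have "Pblock I I0 xi b \<subseteq> Stab" if b: "b \<in> blocks" for b
  proof -
    have "b \<subseteq> I" using b Union_blocks by blast
    then show ?thesis unfolding Pblock_eq[OF \<open>b \<subseteq> I\<close>] using conj_perm_in_Stab[OF b] by blast
  qed
  then show "\<forall>A\<in>set ((if I0 = {} then [] else [P0grp I K H I0]) @ map (Pblock I I0 xi) bs). A \<subseteq> Stab"
    using P0grp_subset_Stab assms by (cases "I0 = {}") auto
qed

lemma Stab_eq_Ptriple: "Stab = Ptriple I K H I0 blocks xi"
proof -
  define bs where "bs = (SOME bs. distinct bs \<and> set bs = blocks)"
  have "finite blocks" using finite_I by (simp add: blocks_def)
  then have "\<exists>bs. distinct bs \<and> set bs = blocks" using finite_distinct_list by blast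
  then have bs: "distinct bs" "set bs = blocks" unfolding bs_def by (metis (mono_tags) someI_ex)+
  have "Ptriple I K H I0 blocks xi =
      setprod_list I ((if I0 = {} then [] else [P0grp I K H I0]) @ map (Pblock I I0 xi) bs)"
    unfolding Ptriple_def bs_def ..
  then show ?thesis using Stab_subset_product[OF bs] setprod_factors_subset_Stab[OF bs(2)] by blast
qed

end

theorem proposition4p3:
  fixes n :: nat and K H :: "quat set" and P :: "qmat set"
  assumes "n \<ge> 3"
    and "finite K" and "finite H"
    and "qsubgroup K" and "qsubgroup H"
    and "commutators_in K H" and "qnormal H K"
    and "parabolic {1..n} K H P"
  shows "\<exists>I0 Pt \<xi>. parabolic_triple {1..n} K I0 Pt \<xi> \<and> P = Ptriple {1..n} K H I0 Pt \<xi>"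
proof -
  obtain X where X: "X \<subseteq> qvecs {1..n}" "P = stabiliser {1..n} (Ggrp {1..n} K H) X"
    using assms(8) unfolding parabolic_def by blast
  interpret pointwise_stabiliser K H "{1..n}" X
    using assms(6,7) X(1) by unfold_locales auto
  have "P = Stab" unfolding Stab_def X(2) ..
  then show ?thesis using parabolic_triple Stab_eq_Ptriple by blast
qed

end
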